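(* Let $0\le\beta<1$ and $\Delta>1$ be constants and let $q\ge3(1-\beta)\Delta+2$. Define $f_q:\mathbb{R}_{\ge0}\to\mathbb{R}_{\ge0}$ by $f_q(x)=\frac{2(1-\beta)}{q-1-(1-\beta)x}$ if $x\le\frac{q-1}{1-\beta}-2$ and $f_q(x)=1$ otherwise. Let $X\sim\mathrm{Bin}(n,\Delta/n)$. Then for all sufficiently large $n$, $\mathbb{E}[f_q(X)]<\frac{1}{\Delta}$. *)

theory Defs
  imports "HOL-Probability.Probability"
begin

definition f_q :: "real \<Rightarrow> real \<Rightarrow> real \<Rightarrow> real" where
  "f_q \<beta> q x = (if x \<le> (q - 1) / (1 - \<beta>) - 2
                 then 2 * (1 - \<beta>) / (q - 1 - (1 - \<beta>) * x)
                 else 1)"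

end

theory Submission
  imports Defs
begin

text \<open>
  With \<open>u = (q - 1) / (1 - \<beta>) - \<Delta> \<ge> 2\<Delta> + 1\<close> and the centred variable \<open>t = x - \<Delta>\<close>,
  \<open>f\<^sub>q(x)\<close> is \<open>2 / (u - t)\<close> capped at 1. This is dominated by the cubic Taylor polynomial of
  \<open>2 / (u - t)\<close> at \<open>t = 0\<close> plus \<open>t\<^sup>4 / u\<^sup>4\<close>, the exact remainder being
  \<open>t\<^sup>4 / u\<^sup>4 \<cdot> 2 / (u - t)\<close>. Under \<open>Bin(n, \<Delta>/n)\<close>, whose mean is \<open>\<Delta>\<close>, the expectation of
  this polynomial involves only the central moments of order at most 4; computed from the
  factorial moments \<open>E[X(X-1)\<cdots>(X-j+1)] = n(n-1)\<cdots>(n-j+1) p\<^sup>j\<close>, they are at most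
  \<open>\<Delta>\<close>, \<open>\<Delta>\<close> and \<open>\<Delta>(1 + 3\<Delta>)\<close>. The resulting bound is below \<open>1/\<Delta>\<close> because
  \<open>u \<ge> 2\<Delta> + 1\<close>, for every \<open>n \<ge> \<Delta>\<close>.
\<close>

lemma expectation_binomial_pmf_Suc:
  fixes f :: "nat \<Rightarrow> real"
  assumes "p \<in> {0..1}"
  shows "measure_pmf.expectation (binomial_pmf (Suc n) p) f =
           p * measure_pmf.expectation (binomial_pmf n p) (\<lambda>k. f (Suc k)) +
           (1 - p) * measure_pmf.expectation (binomial_pmf n p) f"
proof -
  have "binomial_pmf (Suc n) p =
          bernoulli_pmf p \<bind> (\<lambda>b. map_pmf (\<lambda>k. (if b then 1 else 0) + k) (binomial_pmf n p))"
    using binomial_pmf_Suc[of p n] assms by (simp add: map_pmf_def)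
  also have "measure_pmf.expectation \<dots> f =
      (\<Sum>b\<in>UNIV. pmf (bernoulli_pmf p) b *\<^sub>R
         measure_pmf.expectation (map_pmf (\<lambda>k. (if b then 1 else 0) + k) (binomial_pmf n p)) f)"
    by (rule pmf_expectation_bind) (use assms finite_set_pmf_binomial_pmf[of p n] in auto)
  finally show ?thesis
    using assms by (simp add: UNIV_bool)
qed

definition falling_factorial :: "real \<Rightarrow> nat \<Rightarrow> real" where
  "falling_factorial x j = (\<Prod>i<j. x - real i)"

lemma falling_factorial_plus_one:
  "falling_factorial (x + 1) (Suc j) =
     falling_factorial x (Suc j) + real (Suc j) * falling_factorial x j"
proof -
  have "falling_factorial (x + 1) (Suc j) = (x + 1) * falling_factorial x j"
    unfolding falling_factorial_def prod.lessThan_Suc_shift by simp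
  moreover have "falling_factorial x (Suc j) = falling_factorial x j * (x - real j)"
    unfolding falling_factorial_def by simp
  ultimately show ?thesis by (simp add: algebra_simps)
qed

lemma expectation_binomial_falling_factorial:
  assumes "p \<in> {0..1}"
  shows "measure_pmf.expectation (binomial_pmf n p) (\<lambda>k. falling_factorial (real k) j) =
           falling_factorial (real n) j * p ^ j"
proof (induction n arbitrary: j)
  case 0
  show ?case
    using assms by (cases j)
      (simp_all add: falling_factorial_def binomial_pmf_0 prod.lessThan_Suc_shift del: prod.lessThan_Suc)
next
  case (Suc n)
  show ?case
  proof (cases j)
    case 0
    then show ?thesis by (simp add: falling_factorial_def)
  next
    case (Suc i)
    have "(\<lambda>k. falling_factorial (real (Suc k)) j) =
        (\<lambda>k. falling_factorial (real k) j + real j * falling_factorial (real k) i)"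
      unfolding Suc of_nat_Suc add.commute[of 1] falling_factorial_plus_one ..
    then have "measure_pmf.expectation (binomial_pmf (Suc n) p) (\<lambda>k. falling_factorial (real k) j) =
        p * (falling_factorial (real n) j * p ^ j + real j * (falling_factorial (real n) i * p ^ i)) +
        (1 - p) * (falling_factorial (real n) j * p ^ j)"
      using assms by (simp add: expectation_binomial_pmf_Suc Suc.IH)
    also have "\<dots> = falling_factorial (real n + 1) j * p ^ j"
      unfolding Suc falling_factorial_plus_one by (simp add: algebra_simps)
    finally show ?thesis by (simp add: add.commute)
  qed
qed

lemma binomial_central_moment_2:
  assumes "p \<in> {0..1}"
  shows "measure_pmf.expectation (binomial_pmf n p) (\<lambda>k. (real k - real n * p) ^ 2) =
           real n * p * (1 - p)"
proof -
  define c where "c = real n * p"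
  have "(\<lambda>k. (real k - c) ^ 2) = (\<lambda>k. falling_factorial (real k) 2 +
          (1 - 2 * c) * falling_factorial (real k) 1 + c^2)"
    by (simp add: falling_factorial_def eval_nat_numeral algebra_simps)
  then show ?thesis
    using assms by (simp add: expectation_binomial_falling_factorial c_def)
      (simp add: falling_factorial_def eval_nat_numeral algebra_simps)
qed

lemma binomial_central_moment_3:
  assumes "p \<in> {0..1}"
  shows "measure_pmf.expectation (binomial_pmf n p) (\<lambda>k. (real k - real n * p) ^ 3) =
           real n * p * (1 - p) * (1 - 2 * p)"
proof -
  define c where "c = real n * p"
  have "(\<lambda>k. (real k - c) ^ 3) = (\<lambda>k. falling_factorial (real k) 3 +
          (3 - 3 * c) * falling_factorial (real k) 2 +
          (1 - 3 * c + 3 * c^2) * falling_factorial (real k) 1 - c^3)"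
    by (simp add: falling_factorial_def eval_nat_numeral algebra_simps)
  then show ?thesis
    using assms by (simp add: expectation_binomial_falling_factorial c_def)
      (simp add: falling_factorial_def eval_nat_numeral algebra_simps)
qed

lemma binomial_central_moment_4:
  assumes "p \<in> {0..1}"
  shows "measure_pmf.expectation (binomial_pmf n p) (\<lambda>k. (real k - real n * p) ^ 4) =
           real n * p * (1 - p) * (1 + 3 * (real n - 2) * p * (1 - p))"
proof -
  define c where "c = real n * p"
  have "(\<lambda>k. (real k - c) ^ 4) = (\<lambda>k. falling_factorial (real k) 4 +
          (6 - 4 * c) * falling_factorial (real k) 3 +
          (7 - 12 * c + 6 * c^2) * falling_factorial (real k) 2 +
          (1 - 4 * c + 6 * c^2 - 4 * c^3) * falling_factorial (real k) 1 + c^4)"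
    by (simp add: falling_factorial_def eval_nat_numeral algebra_simps)
  then show ?thesis
    using assms by (simp add: expectation_binomial_falling_factorial c_def)
      (simp add: falling_factorial_def eval_nat_numeral algebra_simps)
qed

lemma binomial_central_moments_le:
  fixes n :: nat and p :: real
  assumes p: "p \<in> {0..1}"
  defines "\<mu> \<equiv> real n * p"
  shows "measure_pmf.expectation (binomial_pmf n p) (\<lambda>k. (real k - \<mu>) ^ 2) \<le> \<mu>"
    and "measure_pmf.expectation (binomial_pmf n p) (\<lambda>k. (real k - \<mu>) ^ 3) \<le> \<mu>"
    and "measure_pmf.expectation (binomial_pmf n p) (\<lambda>k. (real k - \<mu>) ^ 4) \<le> \<mu> * (1 + 3 * \<mu>)"
proof -
  have p01: "0 \<le> p" "p \<le> 1" and \<mu>: "0 \<le> \<mu>"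
    using p by (auto simp: \<mu>_def)
  have "measure_pmf.expectation (binomial_pmf n p) (\<lambda>k. (real k - \<mu>) ^ 2) = \<mu> - \<mu> * p"
    unfolding \<mu>_def binomial_central_moment_2[OF p] by (simp add: algebra_simps)
  then show "measure_pmf.expectation (binomial_pmf n p) (\<lambda>k. (real k - \<mu>) ^ 2) \<le> \<mu>"
    using p01 \<mu> by simp
  have "measure_pmf.expectation (binomial_pmf n p) (\<lambda>k. (real k - \<mu>) ^ 3) =
          \<mu> - \<mu> * (p * (3 - 2 * p))"
    unfolding \<mu>_def binomial_central_moment_3[OF p] by (simp add: algebra_simps)
  then show "measure_pmf.expectation (binomial_pmf n p) (\<lambda>k. (real k - \<mu>) ^ 3) \<le> \<mu>"
    using p01 \<mu> by simp
  have "measure_pmf.expectation (binomial_pmf n p) (\<lambda>k. (real k - \<mu>) ^ 4) =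
          \<mu> * (1 + 3 * \<mu>) - \<mu> * (p + 3 * \<mu> * (p * (2 - p)) + 6 * p * (1 - p)^2)"
    unfolding \<mu>_def binomial_central_moment_4[OF p] by (simp add: power2_eq_square algebra_simps)
  moreover have "0 \<le> \<mu> * (p + 3 * \<mu> * (p * (2 - p)) + 6 * p * (1 - p)^2)"
    using p01 \<mu> by simp
  ultimately show "measure_pmf.expectation (binomial_pmf n p) (\<lambda>k. (real k - \<mu>) ^ 4) \<le>
                    \<mu> * (1 + 3 * \<mu>)"
    by linarith
qed

lemma capped_reciprocal_le_taylor:
  fixes t u :: real
  assumes u: "u \<ge> 2"
  shows "(if t \<le> u - 2 then 2 / (u - t) else 1) \<le>
           2/u + 2*t/u^2 + 2*t^2/u^3 + 2*t^3/u^4 + t^4/u^4"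
    (is "_ \<le> ?P")
proof (cases "t < u")
  case True
  define w where "w = 2 / (u - t)"
  define r where "r = t^4/u^4"
  have w: "w > 0"
    unfolding w_def using True by simp
  \<comment> \<open>Taylor expansion of \<open>w\<close> in \<open>t\<close> with exact remainder \<open>r * w\<close>\<close>
  have expansion: "w = ?P - r + r * w"
    unfolding w_def r_def using u True
    by (simp add: field_simps power2_eq_square power3_eq_cube power4_eq_xxxx)
  show ?thesis
  proof (cases "t \<le> u - 2")
    case True
    then have "w \<le> 1"
      unfolding w_def by simp
    then have "r * w \<le> r"
      unfolding r_def using w by (intro mult_right_le_one_le) auto
    then show ?thesis
      using True expansion by (simp add: w_def)
  next
    case False
    then have "w > 1"
      unfolding w_def using \<open>t < u\<close> by simp
    moreover have "r \<le> 1"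
      unfolding r_def using False \<open>t < u\<close> u by (simp add: power_le_one)
    ultimately have "0 \<le> (w - 1) * (1 - r)"
      by simp
    also have "\<dots> = w - r * w - 1 + r"
      by (simp add: algebra_simps)
    finally show ?thesis
      using False expansion by simp
  qed
next
  case False
  then have "t^4/u^4 \<ge> 1" and "t \<ge> 0"
    using u by (simp_all add: power_mono)
  moreover from \<open>t \<ge> 0\<close> have "0 \<le> 2/u + 2*t/u^2 + 2*t^2/u^3 + 2*t^3/u^4"
    using u by simp
  ultimately show ?thesis
    using False by simp
qed

lemma expectation_binomial_taylor_le:
  fixes n :: nat and p u :: real
  assumes p: "p \<in> {0..1}" and u: "u > 0"
  defines "\<mu> \<equiv> real n * p"
  shows "measure_pmf.expectation (binomial_pmf n p)
           (\<lambda>k. 2/u + 2*(real k - \<mu>)/u^2 + 2*(real k - \<mu>)^2/u^3 +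
                 2*(real k - \<mu>)^3/u^4 + (real k - \<mu>)^4/u^4)
         \<le> 2/u + 2*\<mu>/u^3 + 2*\<mu>/u^4 + \<mu>*(1 + 3*\<mu>)/u^4"
proof -
  have mean: "measure_pmf.expectation (binomial_pmf n p) real = \<mu>"
    using expectation_binomial_falling_factorial[OF p, of n 1] p
    by (simp add: falling_factorial_def \<mu>_def)
  have "measure_pmf.expectation (binomial_pmf n p)
          (\<lambda>k. 2/u + 2*(real k - \<mu>)/u^2 + 2*(real k - \<mu>)^2/u^3 +
                2*(real k - \<mu>)^3/u^4 + (real k - \<mu>)^4/u^4) =
        2/u + 2 * measure_pmf.expectation (binomial_pmf n p) (\<lambda>k. (real k - \<mu>) ^ 2) / u^3 +
          2 * measure_pmf.expectation (binomial_pmf n p) (\<lambda>k. (real k - \<mu>) ^ 3) / u^4 +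
          measure_pmf.expectation (binomial_pmf n p) (\<lambda>k. (real k - \<mu>) ^ 4) / u^4"
    using p mean by simp
  also have "\<dots> \<le> 2/u + 2*\<mu>/u^3 + 2*\<mu>/u^4 + \<mu>*(1 + 3*\<mu>)/u^4"
    using binomial_central_moments_le[OF p, of n, folded \<mu>_def] u
    by (intro add_mono divide_right_mono mult_left_mono order.refl) auto
  finally show ?thesis .
qed

lemma taylor_bound_lt_inverse:
  fixes D u :: real
  assumes D: "D > 1" and u: "u \<ge> 2*D + 1"
  shows "2/u + 2*D/u^3 + 2*D/u^4 + D*(1 + 3*D)/u^4 < 1/D"
proof -
  have u_pos: "u > 0"
    using D u by linarith
  have "D * (2*u^3 + 2*D*u + 2*D + D*(1 + 3*D)) = 2*D*u^3 + 2*D^2*u + (3*D^2 + 3*D^3)"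
    by (simp add: power2_eq_square power3_eq_cube algebra_simps)
  also have "\<dots> < 2*D*u^3 + 2*D^2*u + (2*D^2 + 4*D + 1) * (2*D + 1)"
  proof -
    have "0 < D^3 + 7*D^2 + 6*D + 1"
      using D by (intro add_pos_pos) auto
    then show ?thesis
      by (simp add: power2_eq_square power3_eq_cube algebra_simps)
  qed
  also have "\<dots> \<le> 2*D*u^3 + 2*D^2*u + (2*D^2 + 4*D + 1) * u"
    using D u by (simp add: mult_left_mono)
  also have "\<dots> = 2*D*u^3 + (2*D + 1)^2 * u"
    by (simp add: power2_eq_square algebra_simps)
  also have "\<dots> \<le> 2*D*u^3 + u^2 * u"
    using D u u_pos by (simp add: power_mono)
  also have "\<dots> = (2*D + 1) * u^3"
    by (simp add: power2_eq_square power3_eq_cube algebra_simps)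
  also have "\<dots> \<le> u * u^3"
    using u u_pos by (simp add: mult_right_mono)
  finally have "(2*u^3 + 2*D*u + 2*D + D*(1 + 3*D)) * D < u^4"
    by (simp add: power4_eq_xxxx power3_eq_cube mult.commute)
  then have "(2*u^3 + 2*D*u + 2*D + D*(1 + 3*D)) / u^4 < 1/D"
    using D u_pos by (simp add: pos_divide_less_eq pos_less_divide_eq)
  moreover have "2/u + 2*D/u^3 + 2*D/u^4 + D*(1 + 3*D)/u^4 =
                   (2*u^3 + 2*D*u + 2*D + D*(1 + 3*D)) / u^4"
    using u_pos by (simp add: field_simps power2_eq_square power3_eq_cube power4_eq_xxxx)
  ultimately show ?thesis
    by simp
qed

lemma f_q_eq:
  assumes "\<beta> < 1"
  shows "f_q \<beta> q x =
           (if x \<le> (q - 1) / (1 - \<beta>) - 2 then 2 / ((q - 1) / (1 - \<beta>) - x) else 1)"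
proof -
  have "(q - 1) / (1 - \<beta>) - x = (q - 1 - (1 - \<beta>) * x) / (1 - \<beta>)"
    using assms by (simp add: field_simps)
  then show ?thesis
    unfolding f_q_def using assms by simp
qed

theorem mainTheorem14:
  fixes \<beta> \<Delta> :: real and q :: nat
  assumes "0 \<le> \<beta>" and "\<beta> < 1" and "\<Delta> > 1"
    and "real q \<ge> 3 * (1 - \<beta>) * \<Delta> + 2"
  shows "\<forall>\<^sub>F n in sequentially.
           measure_pmf.expectation (binomial_pmf n (\<Delta> / real n))
             (\<lambda>k. f_q \<beta> (real q) (real k)) < 1 / \<Delta>"
proof -
  define u where "u = (real q - 1) / (1 - \<beta>) - \<Delta>"
  have "(3 * \<Delta> + 1) * (1 - \<beta>) \<le> real q - 1"
    using assms by (simp add: algebra_simps)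
  then have u: "u \<ge> 2 * \<Delta> + 1"
    unfolding u_def using assms(2) by (simp add: field_simps)
  have f_q_shift:
    "f_q \<beta> (real q) x = (if x - \<Delta> \<le> u - 2 then 2 / (u - (x - \<Delta>)) else 1)" for x
    unfolding u_def f_q_eq[OF assms(2)] by (simp add: algebra_simps)
  show ?thesis
    using eventually_ge_at_top[of "nat \<lceil>\<Delta>\<rceil>"]
  proof eventually_elim
    case (elim n)
    then have n: "real n \<ge> \<Delta>"
      by linarith
    define p where "p = \<Delta> / real n"
    have p: "p \<in> {0..1}" and mean: "real n * p = \<Delta>"
      unfolding p_def using n assms(3) by auto
    have "measure_pmf.expectation (binomial_pmf n p) (\<lambda>k. f_q \<beta> (real q) (real k))
        \<le> measure_pmf.expectation (binomial_pmf n p)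
             (\<lambda>k. 2/u + 2*(real k - \<Delta>)/u^2 + 2*(real k - \<Delta>)^2/u^3 +
                   2*(real k - \<Delta>)^3/u^4 + (real k - \<Delta>)^4/u^4)"
      using p u assms(3) unfolding f_q_shift
      by (intro integral_mono capped_reciprocal_le_taylor) auto
    also have "\<dots> \<le> 2/u + 2*\<Delta>/u^3 + 2*\<Delta>/u^4 + \<Delta>*(1 + 3*\<Delta>)/u^4"
      using expectation_binomial_taylor_le[OF p, where n = n and u = u] u assms(3)
      unfolding mean by simp
    also have "\<dots> < 1 / \<Delta>"
      using assms(3) u by (rule taylor_bound_lt_inverse)
    finally show ?case
      unfolding p_def .
  qed
qed

end
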